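(* For each $n\in\mathbb N$, the subgroup $K_n^{\mathbb C}=\{a\in\mathcal B^{\mathbb C}_{TM}\mid a(\tau)=0\ \text{for all }\tau\in\mathcal T\text{ with }|\tau|\le n\}$ is a closed normal Lie subgroup of $\mathcal B^{\mathbb C}_{TM}$, and $K_n=K_n^{\mathbb C}\cap\mathcal B_{TM}$ is a closed normal subgroup of $\mathcal B_{TM}$. Both are split submanifolds of finite codimension (each is a closed affine subspace $e+\{a\in M^*_{\mathbb K}\mid a(\tau)=0\ \forall\,|\tau|\le n\}$ of the respective group).
   Context: $\mathcal T$ is the set of rooted trees (at least one vertex), $\mathcal T_0=\mathcal T\cup\{\emptyset\}$, $|\tau|$ the number of vertices. The complex tame Butcher group $\mathcal B^{\mathbb C}_{TM}$ is the set of $a\colon\mathcal T_0\to\mathbb C$ with $a(\emptyset)=1$ and $|a(\tau)|\le CK^{|\tau|}$ for some $C,K>0$ and all $\tau\in\mathcal T$, with product $(a\cdot b)(\tau)=\sum_{s\in\mathrm{OST}(\tau)}b(s_\tau)\prod_{\theta\in\tau\setminus s}a(\theta)$ (sum over ordered subtrees $s$: vertex subsets connected in $\tau$ containing the root if nonempty; $s_\tau$ the induced tree; $\tau\setminus s$ the remaining forest) and unit $e$; $\mathcal B_{TM}$ is its real-valued subgroup. For $\mathbb K\in\{\mathbb R,\mathbb C\}$, $M^*_{\mathbb K}=\{a\in\bigcup_k\mathbb K^{\mathcal T_0}(\omega_k)\mid a(\emptyset)=0\}$ with the inductive limit topology of the Banach spaces $\mathbb K^{\mathcal T_0}(\omega_k)=\{a\mid\sup_\tau|a(\tau)|2^{-k|\tau|}<\infty\}$;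 the groups are analytic Lie groups modelled on $M^*_{\mathbb K}$ via the global chart $a\mapsto a-e$. *)

theory Defs
  imports "HOL-Analysis.Analysis" "HOL-Library.Multiset" "HOL-Library.Poly_Mapping"
          "HOL-Algebra.Coset"
begin

datatype tree = Node "tree multiset"

primrec tsize :: "tree \<Rightarrow> nat" where
  "tsize (Node M) = 1 + sum_mset (image_mset tsize M)"

text \<open>Elements of T_0: None is the empty tree, Some t a rooted tree.\<close>

text \<open>For a tree t, the coefficient of the monomial S (a multiset of trees) in
  subtree_gen a t is the sum, over all ordered subtrees s of t containing the root
  whose induced tree s_t is Node S, of the product of a over the remaining forest.
  A child c of the root either is dropped (then c belongs to the forest, weight a(c))
  or contributes a nonempty ordered subtree of c (containing c's root).\<close>

primrec subtree_gen :: "(tree option \<Rightarrow> 'k::comm_ring_1) \<Rightarrow> tree \<Rightarrow> (tree multiset \<Rightarrow>\<^sub>0 'k)" where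
  "subtree_gen a (Node M) =
     prod_mset (image_mset (\<lambda>c. Poly_Mapping.single {#} (a (Some c))
        + (\<Sum>S\<in>Poly_Mapping.keys (subtree_gen a c). Poly_Mapping.single {#Node S#} (Poly_Mapping.lookup (subtree_gen a c) S))) M)"

text \<open>Butcher product (a . b)(tau) = sum over ordered subtrees s of b(s_tau) times the
  product of a over tau \ s. The empty subtree contributes b(empty) a(tau).\<close>

definition bprod :: "(tree option \<Rightarrow> 'k::comm_ring_1) \<Rightarrow> (tree option \<Rightarrow> 'k) \<Rightarrow> tree option \<Rightarrow> 'k" where
  "bprod a b x = (case x of None \<Rightarrow> b None
     | Some t \<Rightarrow> b None * a (Some t)
          + (\<Sum>S\<in>Poly_Mapping.keys (subtree_gen a t). Poly_Mapping.lookup (subtree_gen a t) S * b (Some (Node S))))"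

definition bunit :: "tree option \<Rightarrow> 'k::comm_ring_1" where
  "bunit x = (if x = None then 1 else 0)"

definition tame :: "(tree option \<Rightarrow> 'k::real_normed_field) \<Rightarrow> bool" where
  "tame a \<longleftrightarrow> a None = 1 \<and> (\<exists>C>0. \<exists>K>0. \<forall>t. norm (a (Some t)) \<le> C * K ^ tsize t)"

definition BTM :: "(tree option \<Rightarrow> 'k::real_normed_field) monoid" where
  "BTM = \<lparr>carrier = {a. tame a}, mult = bprod, one = bunit\<rparr>"

definition Ksub :: "nat \<Rightarrow> (tree option \<Rightarrow> 'k::real_normed_field) set" where
  "Ksub n = {a \<in> carrier BTM. \<forall>t. tsize t \<le> n \<longrightarrow> a (Some t) = 0}"

definition inE :: "nat \<Rightarrow> (tree option \<Rightarrow> 'k::real_normed_field) \<Rightarrow> bool" where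
  "inE k x \<longleftrightarrow> x None = 0 \<and> bdd_above (range (\<lambda>t. norm (x (Some t)) / 2 ^ (k * tsize t)))"

definition wnorm :: "nat \<Rightarrow> (tree option \<Rightarrow> 'k::real_normed_field) \<Rightarrow> real" where
  "wnorm k x = (SUP t. norm (x (Some t)) / 2 ^ (k * tsize t))"

definition Mstar :: "(tree option \<Rightarrow> 'k::real_normed_field) set" where
  "Mstar = {x. \<exists>k. inE k x}"

text \<open>Inductive limit topology: U is open iff U \<inter> E_k is open in the Banach space E_k
  for every k.\<close>

definition ind_open :: "(tree option \<Rightarrow> 'k::real_normed_field) set \<Rightarrow> bool" where
  "ind_open U \<longleftrightarrow> U \<subseteq> Mstar \<and>
     (\<forall>k. \<forall>x\<in>U. inE k x \<longrightarrow> (\<exists>\<epsilon>>0. \<forall>y. inE k y \<and> wnorm k (\<lambda>t. y t - x t) < \<epsilon> \<longrightarrow> y \<in> U))"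

definition ind_closed :: "(tree option \<Rightarrow> 'k::real_normed_field) set \<Rightarrow> bool" where
  "ind_closed A \<longleftrightarrow> A \<subseteq> Mstar \<and> ind_open (Mstar - A)"

definition chart :: "(tree option \<Rightarrow> 'k::real_normed_field) \<Rightarrow> tree option \<Rightarrow> 'k" where
  "chart a = (\<lambda>x. a x - bunit x)"

definition klinear_subspace :: "(tree option \<Rightarrow> 'k::real_normed_field) set \<Rightarrow> bool" where
  "klinear_subspace V \<longleftrightarrow> (\<lambda>_. 0) \<in> V \<and> (\<forall>x\<in>V. \<forall>y\<in>V. (\<lambda>t. x t + y t) \<in> V)
     \<and> (\<forall>c. \<forall>x\<in>V. (\<lambda>t. c * x t) \<in> V)"

definition kspan :: "(tree option \<Rightarrow> 'k::real_normed_field) set \<Rightarrow> (tree option \<Rightarrow> 'k) set" where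
  "kspan B = {(\<lambda>t. \<Sum>b\<in>B. c b * b t) | c. True}"

definition split_fin_codim :: "(tree option \<Rightarrow> 'k::real_normed_field) set \<Rightarrow> bool" where
  "split_fin_codim V \<longleftrightarrow> klinear_subspace V \<and> V \<subseteq> Mstar \<and> ind_closed V \<and>
     (\<exists>B. finite B \<and> B \<subseteq> Mstar \<and> V \<inter> kspan B = {\<lambda>_. 0} \<and>
        (\<forall>x\<in>Mstar. \<exists>v\<in>V. \<exists>w\<in>kspan B. x = (\<lambda>t. v t + w t)))"

definition Vsub :: "nat \<Rightarrow> (tree option \<Rightarrow> 'k::real_normed_field) set" where
  "Vsub n = {x \<in> Mstar. \<forall>t. tsize t \<le> n \<longrightarrow> x (Some t) = 0}"

end

theory Submission
  imports Defs
begin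

text \<open>
  Write the generating polynomial of the ordered subtrees of \<open>t\<close> as
  \<open>subtree_gen a t = \<Prod>\<^sub>c \<psi>\<^sub>a(c)\<close> over the children \<open>c\<close> of the root, where
  \<open>\<psi>\<^sub>a(c) = a(c) + B\<^sup>+(subtree_gen a c)\<close> is a polynomial in commuting variables indexed
  by trees (\<open>B\<^sup>+\<close> grafts a forest onto a new root). The Butcher product evaluates this:
  \<open>(a\<cdot>b)(c)\<close> is \<open>\<psi>\<^sub>a(c)\<close> with every variable \<open>u\<close> replaced by \<open>b(u)\<close>. Substituting
  \<open>\<psi>\<^sub>b(u)\<close> for every variable \<open>u\<close> in \<open>\<psi>\<^sub>a(c)\<close> yields \<open>\<psi>\<^sub>a\<^sub>\<cdot>\<^sub>b(c)\<close>; since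
  evaluation after substitution is evaluation at the substituted values, the product
  is associative. Left inverses are built recursively on the size of trees, as
  \<open>(y\<cdot>a)(t) = y(t) + (terms involving only smaller trees)\<close>.

  Tameness is preserved because the weighted \<open>\<ell>\<^sup>1\<close>-norm of a polynomial, with weight
  \<open>w\<^bsup>|S|\<^esup>\<close> on the monomial \<open>S\<close>, is submultiplicative; choosing \<open>w = E/2\<close> with \<open>E\<close>
  large bounds \<open>\<psi>\<^sub>a(c)\<close> by \<open>E\<^bsup>|c|\<^esup>\<close> inductively.

  Finally \<open>K\<^sub>n\<close> is normal since the values of a product on trees of size \<open>\<le> n\<close> only
  depend on the values of the factors there, and the chart maps \<open>K\<^sub>n\<close> onto the
  kernel of the finitely many continuous coordinate functionals \<open>x \<mapsto> x(t)\<close>,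
  \<open>|t| \<le> n\<close>, which is split by the span of the corresponding indicator functions.
\<close>

definition poly_eval :: "('k::zero \<Rightarrow> 'b::comm_ring_1) \<Rightarrow> ('m \<Rightarrow> 'b) \<Rightarrow> ('m \<Rightarrow>\<^sub>0 'k) \<Rightarrow> 'b" where
  "poly_eval \<iota> m p = (\<Sum>S\<in>Poly_Mapping.keys p. \<iota> (Poly_Mapping.lookup p S) * m S)"

lemma poly_eval_superset:
  assumes "finite A" "Poly_Mapping.keys p \<subseteq> A" "\<iota> 0 = 0"
  shows "poly_eval \<iota> m p = (\<Sum>S\<in>A. \<iota> (Poly_Mapping.lookup p S) * m S)"
  unfolding poly_eval_def
  by (rule sum.mono_neutral_left) (use assms in \<open>auto simp: in_keys_iff\<close>)

lemma poly_mapping_sum_singles: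
  fixes p :: "'m \<Rightarrow>\<^sub>0 'k::comm_monoid_add"
  shows "p = (\<Sum>S\<in>Poly_Mapping.keys p. Poly_Mapping.single S (Poly_Mapping.lookup p S))"
  by (rule poly_mapping_eqI) (simp add: lookup_sum lookup_single when_def in_keys_iff)

lemma additive_eq_poly_eval:
  fixes p :: "'m \<Rightarrow>\<^sub>0 'k::comm_monoid_add"
  assumes "F 0 = 0" "\<And>p q. F (p + q) = F p + F q"
    and "\<And>S v. F (Poly_Mapping.single S v) = \<iota> v * m S"
  shows "F p = poly_eval \<iota> m p"
proof -
  have "F p = F (\<Sum>S\<in>Poly_Mapping.keys p. Poly_Mapping.single S (Poly_Mapping.lookup p S))"
    by (subst poly_mapping_sum_singles[of p]) simp
  also have "\<dots> = (\<Sum>S\<in>Poly_Mapping.keys p. F (Poly_Mapping.single S (Poly_Mapping.lookup p S)))"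
    by (simp add: sum_comp_morphism[of F, OF assms(1,2), symmetric] comp_def)
  also have "\<dots> = poly_eval \<iota> m p" by (simp add: assms(3) poly_eval_def)
  finally show ?thesis .
qed

lemma poly_eval_zero [simp]: "poly_eval \<iota> m 0 = 0"
  by (simp add: poly_eval_def)

lemma poly_eval_single:
  "\<iota> 0 = 0 \<Longrightarrow> poly_eval \<iota> m (Poly_Mapping.single S v) = \<iota> v * m S"
  by (simp add: poly_eval_def)

lemma poly_eval_add:
  assumes "\<iota> 0 = 0" "\<And>x y. \<iota> (x + y) = \<iota> x + \<iota> y"
  shows "poly_eval \<iota> m (p + q) = poly_eval \<iota> m p + poly_eval \<iota> m q"
proof -
  let ?A = "Poly_Mapping.keys p \<union> Poly_Mapping.keys q"
  have "poly_eval \<iota> m r = (\<Sum>S\<in>?A. \<iota> (Poly_Mapping.lookup r S) * m S)" if "r \<in> {p, q, p + q}" for r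
    by (rule poly_eval_superset) (use that keys_add[of p q] assms(1) in auto)
  then show ?thesis
    by (simp add: lookup_add assms(2) distrib_right sum.distrib)
qed

lemma poly_eval_sum:
  assumes "\<iota> 0 = 0" "\<And>x y. \<iota> (x + y) = \<iota> x + \<iota> y"
  shows "poly_eval \<iota> m (sum f I) = (\<Sum>i\<in>I. poly_eval \<iota> m (f i))"
  using sum_comp_morphism[of "poly_eval \<iota> m" f I] by (simp add: poly_eval_add[where \<iota>=\<iota>, OF assms] comp_def)

lemma poly_eval_mult:
  fixes p q :: "'m::comm_monoid_add \<Rightarrow>\<^sub>0 'k::comm_ring_1"
  assumes "\<iota> 0 = 0" "\<And>x y. \<iota> (x + y) = \<iota> x + \<iota> y" "\<And>x y. \<iota> (x * y) = \<iota> x * \<iota> y"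
    and "\<And>S T. m (S + T) = m S * m T"
  shows "poly_eval \<iota> m (p * q) = poly_eval \<iota> m p * poly_eval \<iota> m q"
proof -
  have "p * q = (\<Sum>S\<in>Poly_Mapping.keys p. Poly_Mapping.single S (Poly_Mapping.lookup p S))
      * (\<Sum>T\<in>Poly_Mapping.keys q. Poly_Mapping.single T (Poly_Mapping.lookup q T))"
    by (metis poly_mapping_sum_singles)
  also have "\<dots> = (\<Sum>S\<in>Poly_Mapping.keys p. \<Sum>T\<in>Poly_Mapping.keys q.
       Poly_Mapping.single (S + T) (Poly_Mapping.lookup p S * Poly_Mapping.lookup q T))"
    by (simp add: sum_product mult_single)
  finally have "poly_eval \<iota> m (p * q) = (\<Sum>S\<in>Poly_Mapping.keys p. \<Sum>T\<in>Poly_Mapping.keys q.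
       \<iota> (Poly_Mapping.lookup p S) * m S * (\<iota> (Poly_Mapping.lookup q T) * m T))"
    by (simp add: poly_eval_sum[where \<iota>=\<iota>, OF assms(1,2)] poly_eval_single[where \<iota>=\<iota>, OF assms(1)] assms(3,4) mult_ac)
  also have "\<dots> = poly_eval \<iota> m p * poly_eval \<iota> m q"
    by (simp add: poly_eval_def sum_product)
  finally show ?thesis .
qed

lemma poly_eval_prod_mset:
  fixes f :: "'a \<Rightarrow> ('m::comm_monoid_add \<Rightarrow>\<^sub>0 'k::comm_ring_1)"
  assumes "\<iota> 0 = 0" "\<And>x y. \<iota> (x + y) = \<iota> x + \<iota> y" "\<And>x y. \<iota> (x * y) = \<iota> x * \<iota> y"
    and "\<And>S T. m (S + T) = m S * m T" "\<iota> 1 = 1" "m 0 = 1"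
  shows "poly_eval \<iota> m (prod_mset (image_mset f M)) = prod_mset (image_mset (\<lambda>c. poly_eval \<iota> m (f c)) M)"
proof (induction M)
  case empty
  show ?case
    using poly_eval_single[where \<iota>=\<iota>, OF assms(1), of m 0 1] by (simp add: assms(5,6))
next
  case (add x M)
  then show ?case by (simp add: poly_eval_mult[where \<iota>=\<iota>, OF assms(1-4)])
qed

lemma lookup_single_zero_mult:
  fixes q :: "'m::comm_monoid_add \<Rightarrow>\<^sub>0 'k::comm_ring_1"
  shows "Poly_Mapping.lookup (Poly_Mapping.single 0 v * q) S = v * Poly_Mapping.lookup q S"
  by (simp flip: mult_map_scale_conv_mult add: map.rep_eq when_def)

lemma poly_eval_single_zero_mult:
  fixes q :: "'m::comm_monoid_add \<Rightarrow>\<^sub>0 'k::comm_ring_1"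
  assumes "\<iota> 0 = 0" "\<And>x y. \<iota> (x * y) = \<iota> x * \<iota> y"
  shows "poly_eval \<iota> m (Poly_Mapping.single 0 v * q) = \<iota> v * poly_eval \<iota> m q"
proof -
  have keys: "Poly_Mapping.keys (Poly_Mapping.single 0 v * q) \<subseteq> Poly_Mapping.keys q"
    by (auto simp: in_keys_iff lookup_single_zero_mult)
  have "poly_eval \<iota> m (Poly_Mapping.single 0 v * q)
      = (\<Sum>S\<in>Poly_Mapping.keys q. \<iota> (v * Poly_Mapping.lookup q S) * m S)"
    by (simp add: poly_eval_superset[where \<iota>=\<iota>, OF _ keys assms(1)] lookup_single_zero_mult)
  also have "\<dots> = \<iota> v * poly_eval \<iota> m q"
    by (simp add: poly_eval_def assms(2) sum_distrib_left mult_ac)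
  finally show ?thesis .
qed

definition msize :: "tree multiset \<Rightarrow> nat" where
  "msize S = sum_mset (image_mset tsize S)"

lemma tsize_Node [simp]: "tsize (Node M) = 1 + msize M"
  by (simp add: msize_def)

declare tsize.simps [simp del]

lemma msize_empty [simp]: "msize {#} = 0"
  by (simp add: msize_def)

lemma msize_add [simp]: "msize (S + T) = msize S + msize T"
  by (simp add: msize_def)

lemma msize_add_mset [simp]: "msize (add_mset t S) = tsize t + msize S"
  by (simp add: msize_def)

lemma tsize_pos: "tsize t \<ge> 1"
  by (cases t) simp

lemma tsize_neq_0 [simp]: "tsize t \<noteq> 0"
  by (cases t) simp

lemma tsize_child_less: "c \<in># M \<Longrightarrow> tsize c < tsize (Node M)"
  by (auto dest: multi_member_split)

lemma size_le_msize: "size M \<le> msize M"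
proof (induction M)
  case (add x M)
  then show ?case using tsize_pos[of x] by simp
qed simp

lemma finite_tsize_le: "finite {t. tsize t \<le> n}"
proof (induction n)
  case 0
  then show ?case by simp
next
  case (Suc n)
  let ?T = "{t. tsize t \<le> n}"
  have "{M. set_mset M \<subseteq> ?T \<and> size M \<le> n} = (\<Union>j\<le>n. multisets_of_size ?T j)"
    by (auto simp: multisets_of_size_def)
  then have fin: "finite {M. set_mset M \<subseteq> ?T \<and> size M \<le> n}"
    using Suc by auto
  have "{t. tsize t \<le> Suc n} \<subseteq> Node ` {M. set_mset M \<subseteq> ?T \<and> size M \<le> n}"
  proof
    fix t assume "t \<in> {t. tsize t \<le> Suc n}"
    then obtain M where t: "t = Node M" "msize M \<le> n" by (cases t) auto
    then have "set_mset M \<subseteq> ?T" using tsize_child_less by fastforce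
    moreover have "size M \<le> n" using size_le_msize[of M] t by simp
    ultimately show "t \<in> Node ` {M. set_mset M \<subseteq> ?T \<and> size M \<le> n}" using t by auto
  qed
  then show ?case using fin finite_subset by blast
qed

section \<open>The algebra of subtree polynomials\<close>

definition poly_const :: "'k::comm_ring_1 \<Rightarrow> (tree multiset \<Rightarrow>\<^sub>0 'k)" where
  "poly_const v = Poly_Mapping.single 0 v"

lemma poly_const_0 [simp]: "poly_const 0 = 0"
  by (simp add: poly_const_def)

lemma poly_const_1 [simp]: "poly_const 1 = 1"
  by (simp add: poly_const_def)

lemma poly_const_add: "poly_const (x + y) = poly_const x + poly_const y"
  by (simp add: poly_const_def single_add)

lemma poly_const_mult: "poly_const (x * y) = poly_const x * poly_const y"
  by (simp add: poly_const_def mult_single)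

lemma poly_const_sum: "poly_const (sum f I) = (\<Sum>i\<in>I. poly_const (f i))"
  by (simp add: sum_comp_morphism[of poly_const, symmetric] poly_const_add comp_def)

definition bplus :: "(tree multiset \<Rightarrow>\<^sub>0 'k::comm_ring_1) \<Rightarrow> (tree multiset \<Rightarrow>\<^sub>0 'k)" where
  "bplus p = (\<Sum>S\<in>Poly_Mapping.keys p. Poly_Mapping.single {#Node S#} (Poly_Mapping.lookup p S))"

lemma bplus_eq_poly_eval: "bplus p = poly_eval poly_const (\<lambda>S. Poly_Mapping.single {#Node S#} 1) p"
  by (simp add: bplus_def poly_eval_def poly_const_def mult_single)

lemma bplus_zero [simp]: "bplus 0 = 0"
  by (simp add: bplus_def)

lemma bplus_add: "bplus (p + q) = bplus p + bplus q"
  by (simp add: bplus_eq_poly_eval poly_eval_add poly_const_add)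

lemma bplus_sum: "bplus (sum f I) = (\<Sum>i\<in>I. bplus (f i))"
  by (simp add: sum_comp_morphism[of bplus, symmetric] bplus_add comp_def)

lemma bplus_single: "bplus (Poly_Mapping.single S v) = Poly_Mapping.single {#Node S#} v"
  by (simp add: bplus_def)

lemma bplus_poly_const_mult: "bplus (poly_const v * q) = poly_const v * bplus q"
  using poly_eval_single_zero_mult[where \<iota>=poly_const and m="\<lambda>S. Poly_Mapping.single {#Node S#} 1"]
  by (simp add: bplus_eq_poly_eval poly_const_mult poly_const_def[symmetric])

text \<open>This is \<open>\<psi>\<^sub>a(c)\<close>: a child \<open>c\<close> of the root is either dropped into the remaining
  forest, or contributes an ordered subtree of \<open>c\<close>.\<close>

definition child_gen :: "(tree option \<Rightarrow> 'k::comm_ring_1) \<Rightarrow> tree \<Rightarrow> (tree multiset \<Rightarrow>\<^sub>0 'k)" where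
  "child_gen a c = poly_const (a (Some c)) + bplus (subtree_gen a c)"

lemma subtree_gen_Node: "subtree_gen a (Node M) = prod_mset (image_mset (child_gen a) M)"
  by (simp add: child_gen_def[abs_def] bplus_def poly_const_def)

declare subtree_gen.simps [simp del]

definition forest_eval :: "(tree option \<Rightarrow> 'k::comm_ring_1) \<Rightarrow> (tree multiset \<Rightarrow>\<^sub>0 'k) \<Rightarrow> 'k" where
  "forest_eval b = poly_eval id (\<lambda>S. prod_mset (image_mset (\<lambda>u. b (Some u)) S))"

definition tree_eval :: "(tree option \<Rightarrow> 'k::comm_ring_1) \<Rightarrow> (tree multiset \<Rightarrow>\<^sub>0 'k) \<Rightarrow> 'k" where
  "tree_eval b = poly_eval id (\<lambda>S. b (Some (Node S)))"

definition subst_child_gen :: "(tree option \<Rightarrow> 'k::comm_ring_1) \<Rightarrow> (tree multiset \<Rightarrow>\<^sub>0 'k) \<Rightarrow> (tree multiset \<Rightarrow>\<^sub>0 'k)" where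
  "subst_child_gen b = poly_eval poly_const (\<lambda>S. prod_mset (image_mset (child_gen b) S))"

lemma bprod_None [simp]: "bprod a b None = b None"
  by (simp add: bprod_def)

lemma bprod_Some: "bprod a b (Some t) = b None * a (Some t) + tree_eval b (subtree_gen a t)"
  by (simp add: bprod_def tree_eval_def poly_eval_def)

lemma forest_eval_add: "forest_eval b (p + q) = forest_eval b p + forest_eval b q"
  by (simp add: forest_eval_def poly_eval_add)

lemma forest_eval_mult: "forest_eval b (p * q) = forest_eval b p * forest_eval b q"
  unfolding forest_eval_def by (rule poly_eval_mult) simp_all

lemma forest_eval_prod_mset:
  "forest_eval b (prod_mset (image_mset f M)) = prod_mset (image_mset (\<lambda>c. forest_eval b (f c)) M)"
  unfolding forest_eval_def by (rule poly_eval_prod_mset) simp_all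

lemma forest_eval_single:
  "forest_eval b (Poly_Mapping.single S v) = v * prod_mset (image_mset (\<lambda>u. b (Some u)) S)"
  by (simp add: forest_eval_def poly_eval_single)

lemma forest_eval_poly_const [simp]: "forest_eval b (poly_const v) = v"
  by (simp add: poly_const_def forest_eval_single)

lemma forest_eval_bplus: "forest_eval b (bplus p) = tree_eval b p"
  by (simp add: bplus_def forest_eval_def poly_eval_sum poly_eval_single tree_eval_def
      poly_eval_def[of id "\<lambda>S. b (Some (Node S))"])

lemma forest_eval_child_gen: "b None = 1 \<Longrightarrow> forest_eval b (child_gen a c) = bprod a b (Some c)"
  by (simp add: child_gen_def forest_eval_add forest_eval_bplus bprod_Some)

lemma subst_child_gen_add: "subst_child_gen b (p + q) = subst_child_gen b p + subst_child_gen b q"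
  by (simp add: subst_child_gen_def poly_eval_add poly_const_add)

lemma subst_child_gen_sum: "subst_child_gen b (sum f I) = (\<Sum>i\<in>I. subst_child_gen b (f i))"
  by (simp add: subst_child_gen_def poly_eval_sum poly_const_add)

lemma subst_child_gen_prod_mset:
  "subst_child_gen b (prod_mset (image_mset f M)) = prod_mset (image_mset (\<lambda>c. subst_child_gen b (f c)) M)"
  unfolding subst_child_gen_def by (rule poly_eval_prod_mset) (simp_all add: poly_const_add poly_const_mult)

lemma subst_child_gen_single:
  "subst_child_gen b (Poly_Mapping.single S v) = poly_const v * prod_mset (image_mset (child_gen b) S)"
  by (simp add: subst_child_gen_def poly_eval_single)

lemma subst_child_gen_poly_const [simp]: "subst_child_gen b (poly_const v) = poly_const v"
  by (simp add: poly_const_def subst_child_gen_single)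

lemma subst_child_gen_bplus:
  "subst_child_gen b (bplus p) = poly_const (tree_eval b p) + bplus (subst_child_gen b p)"
proof -
  let ?c = "\<lambda>S. Poly_Mapping.lookup p S"
  have "subst_child_gen b p = subst_child_gen b (\<Sum>S\<in>Poly_Mapping.keys p. Poly_Mapping.single S (?c S))"
    by (subst poly_mapping_sum_singles[of p]) simp
  then have p: "subst_child_gen b p
      = (\<Sum>S\<in>Poly_Mapping.keys p. poly_const (?c S) * subst_child_gen b (Poly_Mapping.single S 1))"
    by (simp add: subst_child_gen_sum subst_child_gen_single)
  have "subst_child_gen b (bplus p) = (\<Sum>S\<in>Poly_Mapping.keys p. poly_const (?c S) * child_gen b (Node S))"
    by (simp add: bplus_def subst_child_gen_sum subst_child_gen_single)
  also have "\<dots> = (\<Sum>S\<in>Poly_Mapping.keys p. poly_const (?c S * b (Some (Node S)))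
      + bplus (poly_const (?c S) * subst_child_gen b (Poly_Mapping.single S 1)))"
    by (rule sum.cong) (simp_all add: child_gen_def bplus_poly_const_mult subst_child_gen_single
        subtree_gen_Node poly_const_mult distrib_left)
  also have "\<dots> = poly_const (tree_eval b p) + bplus (subst_child_gen b p)"
    by (simp add: p bplus_sum poly_const_sum sum.distrib tree_eval_def poly_eval_def)
  finally show ?thesis .
qed

lemma subst_child_gen_child_gen:
  "b None = 1 \<Longrightarrow> subst_child_gen b (child_gen a t) = child_gen (bprod a b) t"
proof (induction t)
  case (Node M)
  have "subst_child_gen b (subtree_gen a (Node M)) = subtree_gen (bprod a b) (Node M)"
    unfolding subtree_gen_Node subst_child_gen_prod_mset
    using Node by (intro arg_cong[where f=prod_mset] image_mset_cong) simp
  then show ?case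
    using Node.prems
    by (simp add: child_gen_def subst_child_gen_add subst_child_gen_bplus bprod_Some
        poly_const_add)
qed

lemma forest_eval_subst_child_gen:
  assumes "c None = 1"
  shows "forest_eval c (subst_child_gen b p) = forest_eval (bprod b c) p"
  unfolding forest_eval_def[of "bprod b c"]
proof (rule additive_eq_poly_eval)
  show "forest_eval c (subst_child_gen b (Poly_Mapping.single S v))
      = id v * (\<Prod>u\<in>#S. bprod b c (Some u))" for S v
    using assms by (simp add: subst_child_gen_single forest_eval_mult forest_eval_prod_mset
        forest_eval_child_gen)
qed (simp_all add: subst_child_gen_add forest_eval_add, simp add: subst_child_gen_def forest_eval_def)

lemma bprod_assoc:
  assumes "b None = 1" "c None = 1"
  shows "bprod (bprod a b) c = bprod a (bprod b c)"
proof
  fix x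
  show "bprod (bprod a b) c x = bprod a (bprod b c) x"
  proof (cases x)
    case (Some t)
    have "bprod (bprod a b) c (Some t) = forest_eval c (child_gen (bprod a b) t)"
      by (simp add: forest_eval_child_gen assms)
    also have "\<dots> = forest_eval c (subst_child_gen b (child_gen a t))"
      by (simp add: subst_child_gen_child_gen assms)
    also have "\<dots> = forest_eval (bprod b c) (child_gen a t)"
      by (simp add: forest_eval_subst_child_gen assms)
    also have "\<dots> = bprod a (bprod b c) (Some t)"
      by (simp add: forest_eval_child_gen assms)
    finally show ?thesis
      using Some by simp
  qed simp
qed

lemma bunit_None [simp]: "bunit None = 1"
  by (simp add: bunit_def)

lemma bunit_Some [simp]: "bunit (Some t) = 0"
  by (simp add: bunit_def)

lemma prod_mset_single_singletons:
  "prod_mset (image_mset (\<lambda>c. Poly_Mapping.single {#c#} (1::'k::comm_ring_1)) M) = Poly_Mapping.single M 1"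
  by (induction M) (simp_all add: mult_single flip: single_one)

lemma child_gen_bunit: "child_gen bunit c = Poly_Mapping.single {#c#} (1::'k::comm_ring_1)"
proof (induction c)
  case (Node S)
  then have "subtree_gen bunit (Node S) = Poly_Mapping.single S (1::'k)"
    unfolding subtree_gen_Node
    by (metis (no_types, lifting) image_mset_cong prod_mset_single_singletons)
  then show ?case by (simp add: child_gen_def bplus_single)
qed

lemma subtree_gen_bunit: "subtree_gen bunit (Node M) = Poly_Mapping.single M (1::'k::comm_ring_1)"
  by (simp add: subtree_gen_Node child_gen_bunit[abs_def] prod_mset_single_singletons)

lemma bprod_bunit_left: "bprod bunit b = b"
proof
  fix x
  show "bprod bunit b x = b x"
  proof (cases x)
    case (Some t)
    then show ?thesis
      by (cases t) (simp add: bprod_Some subtree_gen_bunit tree_eval_def poly_eval_single)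
  qed simp
qed

section \<open>Locality of the product in the size of trees\<close>

lemma subtree_gen_cong:
  "(\<And>u. tsize u < tsize t \<Longrightarrow> a (Some u) = a' (Some u)) \<Longrightarrow> subtree_gen a t = subtree_gen a' t"
proof (induction t)
  case (Node M)
  have "child_gen a c = child_gen a' c" if c: "c \<in># M" for c
  proof -
    have lt: "tsize c < tsize (Node M)"
      by (rule tsize_child_less[OF c])
    have "subtree_gen a c = subtree_gen a' c"
      by (rule Node.IH[OF c]) (use Node.prems lt in auto)
    then show ?thesis
      using Node.prems[OF lt] by (simp add: child_gen_def)
  qed
  then show ?case
    unfolding subtree_gen_Node by (intro arg_cong[where f=prod_mset] image_mset_cong) simp
qed

definition deg_le :: "nat \<Rightarrow> (tree multiset \<Rightarrow>\<^sub>0 'k::comm_ring_1) \<Rightarrow> bool" where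
  "deg_le n p \<longleftrightarrow> (\<forall>S\<in>Poly_Mapping.keys p. msize S \<le> n)"

lemma deg_le_add: "deg_le n p \<Longrightarrow> deg_le n q \<Longrightarrow> deg_le n (p + q)"
  using keys_add[of p q] by (auto simp: deg_le_def)

lemma deg_le_mult: "deg_le n p \<Longrightarrow> deg_le m q \<Longrightarrow> deg_le (n + m) (p * q)"
  using keys_mult[of p q] unfolding deg_le_def by fastforce

lemma deg_le_prod_mset:
  "(\<And>c. c \<in># M \<Longrightarrow> deg_le (g c) (f c)) \<Longrightarrow> deg_le (sum_mset (image_mset g M)) (prod_mset (image_mset f M))"
  by (induction M) (simp_all add: deg_le_mult, simp add: deg_le_def)

lemma deg_le_bplus: "deg_le n p \<Longrightarrow> deg_le (Suc n) (bplus p)"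
  using keys_sum[of "\<lambda>S. Poly_Mapping.single {#Node S#} (Poly_Mapping.lookup p S)" "Poly_Mapping.keys p"]
  unfolding deg_le_def bplus_def by fastforce

lemma deg_le_subtree_gen: "deg_le (msize M) (subtree_gen a (Node M))"
proof -
  have "deg_le (tsize c) (child_gen a c)" for c
  proof (induction c)
    case (Node M')
    have "deg_le (msize M') (subtree_gen a (Node M'))"
      unfolding subtree_gen_Node msize_def by (rule deg_le_prod_mset) (use Node.IH in simp)
    then show ?case
      by (auto simp: child_gen_def poly_const_def intro!: deg_le_add dest: deg_le_bplus)
        (simp add: deg_le_def)
  qed
  then show ?thesis
    unfolding subtree_gen_Node msize_def by (rule deg_le_prod_mset)
qed

lemma tsize_keys_subtree_gen:
  "S \<in> Poly_Mapping.keys (subtree_gen a t) \<Longrightarrow> tsize (Node S) \<le> tsize t"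
  using deg_le_subtree_gen[of "case t of Node M \<Rightarrow> M" a]
  by (cases t) (auto simp: deg_le_def)

definition agree_upto :: "nat \<Rightarrow> (tree option \<Rightarrow> 'k) \<Rightarrow> (tree option \<Rightarrow> 'k) \<Rightarrow> bool" where
  "agree_upto n a a' \<longleftrightarrow> (\<forall>u. tsize u \<le> n \<longrightarrow> a (Some u) = a' (Some u))"

lemma agree_upto_refl [simp]: "agree_upto n a a"
  by (simp add: agree_upto_def)

lemma agree_upto_sym: "agree_upto n a b \<Longrightarrow> agree_upto n b a"
  by (simp add: agree_upto_def)

lemma bprod_agree_upto:
  assumes "agree_upto n a a'" "agree_upto n b b'" "b None = b' None"
  shows "agree_upto n (bprod a b) (bprod a' b')"
  unfolding agree_upto_def
proof (intro allI impI)
  fix t assume t: "tsize t \<le> n"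
  have "subtree_gen a t = subtree_gen a' t"
    by (rule subtree_gen_cong) (use assms(1) t in \<open>auto simp: agree_upto_def\<close>)
  moreover have "tree_eval b (subtree_gen a t) = tree_eval b' (subtree_gen a t)"
    unfolding tree_eval_def poly_eval_def
    by (rule sum.cong[OF refl]) (use assms(2) t tsize_keys_subtree_gen in \<open>fastforce simp: agree_upto_def\<close>)
  moreover have "a (Some t) = a' (Some t)"
    using assms(1) t by (simp add: agree_upto_def)
  ultimately show "bprod a b (Some t) = bprod a' b' (Some t)"
    by (simp add: bprod_Some assms(3))
qed

section \<open>Left inverses\<close>

text \<open>The left inverse \<open>y\<close> of \<open>a\<close> solves \<open>y(t) = -tree_eval a (subtree_gen y t)\<close>, whose
  right-hand side only involves \<open>y\<close> on trees smaller than \<open>t\<close>. It is obtained by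
  iterating this equation from \<open>bunit\<close>: the \<open>k\<close>-th iterate is correct on trees of size
  \<open>\<le> k\<close>.\<close>

definition inv_step :: "(tree option \<Rightarrow> 'k::comm_ring_1) \<Rightarrow> (tree option \<Rightarrow> 'k) \<Rightarrow> tree option \<Rightarrow> 'k" where
  "inv_step a y = (\<lambda>x. case x of None \<Rightarrow> 1 | Some t \<Rightarrow> - tree_eval a (subtree_gen y t))"

definition inv_approx :: "(tree option \<Rightarrow> 'k::comm_ring_1) \<Rightarrow> nat \<Rightarrow> tree option \<Rightarrow> 'k" where
  "inv_approx a k = (inv_step a ^^ k) bunit"

definition binv :: "(tree option \<Rightarrow> 'k::comm_ring_1) \<Rightarrow> tree option \<Rightarrow> 'k" where
  "binv a = (\<lambda>x. case x of None \<Rightarrow> 1 | Some t \<Rightarrow> inv_approx a (tsize t) (Some t))"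

lemma inv_approx_Suc: "inv_approx a (Suc k) (Some t) = - tree_eval a (subtree_gen (inv_approx a k) t)"
  by (simp add: inv_approx_def inv_step_def)

lemma inv_approx_Suc_stable: "tsize t \<le> k \<Longrightarrow> inv_approx a (Suc k) (Some t) = inv_approx a k (Some t)"
proof (induction k arbitrary: t)
  case 0
  then show ?case using tsize_pos[of t] by simp
next
  case (Suc k)
  have "subtree_gen (inv_approx a (Suc k)) t = subtree_gen (inv_approx a k) t"
    by (rule subtree_gen_cong) (use Suc in auto)
  then show ?case by (simp add: inv_approx_Suc)
qed

lemma inv_approx_stable: "k \<le> j \<Longrightarrow> tsize t \<le> k \<Longrightarrow> inv_approx a j (Some t) = inv_approx a k (Some t)"
  by (induction j rule: dec_induct) (simp_all add: inv_approx_Suc_stable)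

lemma binv_None [simp]: "binv a None = 1"
  by (simp add: binv_def)

lemma binv_Some: "binv a (Some t) = - tree_eval a (subtree_gen (binv a) t)"
proof -
  obtain k where k: "tsize t = Suc k"
    using tsize_pos[of t] by (cases "tsize t") auto
  have "subtree_gen (inv_approx a k) t = subtree_gen (binv a) t"
    by (rule subtree_gen_cong) (use k in \<open>auto simp: binv_def intro!: inv_approx_stable\<close>)
  then show ?thesis
    by (simp add: binv_def k inv_approx_Suc)
qed

lemma bprod_binv_left: "a None = 1 \<Longrightarrow> bprod (binv a) a = bunit"
proof
  fix x assume "a None = 1"
  then show "bprod (binv a) a x = bunit x"
    by (cases x) (simp_all add: bprod_Some binv_Some)
qed

section \<open>Tameness estimates\<close>

definition weighted_norm :: "real \<Rightarrow> (tree multiset \<Rightarrow>\<^sub>0 'k::real_normed_field) \<Rightarrow> real" where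
  "weighted_norm w p = (\<Sum>S\<in>Poly_Mapping.keys p. norm (Poly_Mapping.lookup p S) * w ^ msize S)"

lemma weighted_norm_superset:
  "finite A \<Longrightarrow> Poly_Mapping.keys p \<subseteq> A
    \<Longrightarrow> weighted_norm w p = (\<Sum>S\<in>A. norm (Poly_Mapping.lookup p S) * w ^ msize S)"
  unfolding weighted_norm_def by (rule sum.mono_neutral_left) (auto simp: in_keys_iff)

lemma weighted_norm_nonneg: "w \<ge> 0 \<Longrightarrow> weighted_norm w p \<ge> 0"
  unfolding weighted_norm_def by (intro sum_nonneg) simp

lemma weighted_norm_single: "weighted_norm w (Poly_Mapping.single S v) = norm v * w ^ msize S"
  by (simp add: weighted_norm_def)

lemma weighted_norm_one: "weighted_norm w 1 = 1"
  by (simp add: weighted_norm_def)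

lemma weighted_norm_add_le: "w \<ge> 0 \<Longrightarrow> weighted_norm w (p + q) \<le> weighted_norm w p + weighted_norm w q"
proof -
  assume w: "w \<ge> 0"
  let ?A = "Poly_Mapping.keys p \<union> Poly_Mapping.keys q"
  have "weighted_norm w (p + q)
      = (\<Sum>S\<in>?A. norm (Poly_Mapping.lookup p S + Poly_Mapping.lookup q S) * w ^ msize S)"
    by (simp add: weighted_norm_superset[of ?A] keys_add lookup_add)
  also have "\<dots> \<le> (\<Sum>S\<in>?A. norm (Poly_Mapping.lookup p S) * w ^ msize S
      + norm (Poly_Mapping.lookup q S) * w ^ msize S)"
    by (intro sum_mono) (metis distrib_right mult_right_mono norm_triangle_ineq w zero_le_power)
  also have "\<dots> = weighted_norm w p + weighted_norm w q"
    by (simp add: sum.distrib weighted_norm_superset[of ?A])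
  finally show ?thesis .
qed

lemma weighted_norm_sum_le: "w \<ge> 0 \<Longrightarrow> weighted_norm w (sum f I) \<le> (\<Sum>i\<in>I. weighted_norm w (f i))"
proof (induction I rule: infinite_finite_induct)
  case (insert x F)
  then show ?case using weighted_norm_add_le[of w "f x" "sum f F"] by simp
qed (simp_all add: weighted_norm_def)

lemma weighted_norm_mult_le: "w \<ge> 0 \<Longrightarrow> weighted_norm w (p * q) \<le> weighted_norm w p * weighted_norm w q"
proof -
  assume w: "w \<ge> 0"
  have "p * q = (\<Sum>S\<in>Poly_Mapping.keys p. Poly_Mapping.single S (Poly_Mapping.lookup p S))
      * (\<Sum>T\<in>Poly_Mapping.keys q. Poly_Mapping.single T (Poly_Mapping.lookup q T))"
    by (metis poly_mapping_sum_singles)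
  also have "\<dots> = (\<Sum>S\<in>Poly_Mapping.keys p. \<Sum>T\<in>Poly_Mapping.keys q.
       Poly_Mapping.single (S + T) (Poly_Mapping.lookup p S * Poly_Mapping.lookup q T))"
    by (simp add: sum_product mult_single)
  finally have "weighted_norm w (p * q) \<le> (\<Sum>S\<in>Poly_Mapping.keys p. weighted_norm w (\<Sum>T\<in>Poly_Mapping.keys q.
       Poly_Mapping.single (S + T) (Poly_Mapping.lookup p S * Poly_Mapping.lookup q T)))"
    by (simp only: weighted_norm_sum_le[OF w])
  also have "\<dots> \<le> (\<Sum>S\<in>Poly_Mapping.keys p. \<Sum>T\<in>Poly_Mapping.keys q.
       weighted_norm w (Poly_Mapping.single (S + T) (Poly_Mapping.lookup p S * Poly_Mapping.lookup q T)))"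
    by (rule sum_mono) (rule weighted_norm_sum_le[OF w])
  also have "\<dots> = weighted_norm w p * weighted_norm w q"
    unfolding weighted_norm_single by (simp add: weighted_norm_def sum_product norm_mult power_add mult_ac)
  finally show ?thesis .
qed

lemma weighted_norm_prod_mset_le:
  assumes "w \<ge> 0"
  shows "weighted_norm w (prod_mset (image_mset f M)) \<le> prod_mset (image_mset (\<lambda>c. weighted_norm w (f c)) M)"
proof (induction M)
  case (add x M)
  have "weighted_norm w (f x * prod_mset (image_mset f M))
      \<le> weighted_norm w (f x) * weighted_norm w (prod_mset (image_mset f M))"
    by (rule weighted_norm_mult_le[OF assms])
  also have "\<dots> \<le> weighted_norm w (f x) * prod_mset (image_mset (\<lambda>c. weighted_norm w (f c)) M)"
    by (rule mult_left_mono[OF add.IH weighted_norm_nonneg[OF assms]])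
  finally show ?case by simp
qed (simp add: weighted_norm_one)

lemma weighted_norm_bplus_le: "w \<ge> 0 \<Longrightarrow> weighted_norm w (bplus p) \<le> w * weighted_norm w p"
proof -
  assume w: "w \<ge> 0"
  have "weighted_norm w (bplus p)
      \<le> (\<Sum>S\<in>Poly_Mapping.keys p. weighted_norm w (Poly_Mapping.single {#Node S#} (Poly_Mapping.lookup p S)))"
    unfolding bplus_def by (rule weighted_norm_sum_le[OF w])
  also have "\<dots> = w * weighted_norm w p"
    unfolding weighted_norm_single by (simp add: weighted_norm_def sum_distrib_left mult_ac)
  finally show ?thesis .
qed

lemma weighted_norm_child_gen_le:
  "w \<ge> 0 \<Longrightarrow> weighted_norm w (child_gen a c) \<le> norm (a (Some c)) + w * weighted_norm w (subtree_gen a c)"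
  using weighted_norm_add_le[of w "poly_const (a (Some c))" "bplus (subtree_gen a c)"]
    weighted_norm_bplus_le[of w "subtree_gen a c"]
  by (simp add: child_gen_def poly_const_def weighted_norm_single)

lemma norm_tree_eval_le:
  fixes b :: "tree option \<Rightarrow> 'k::real_normed_field"
  assumes "\<And>u. norm (b (Some u)) \<le> C * K ^ tsize u" "0 \<le> K" "K \<le> w" "0 \<le> C"
  shows "norm (tree_eval b p) \<le> C * K * weighted_norm w p"
proof -
  have "norm (tree_eval b p)
      \<le> (\<Sum>S\<in>Poly_Mapping.keys p. norm (Poly_Mapping.lookup p S) * norm (b (Some (Node S))))"
    unfolding tree_eval_def poly_eval_def by (rule order_trans[OF norm_sum]) (simp add: norm_mult)
  also have "\<dots> \<le> (\<Sum>S\<in>Poly_Mapping.keys p. norm (Poly_Mapping.lookup p S) * (C * K * w ^ msize S))"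
  proof (intro sum_mono mult_left_mono)
    fix S
    have "norm (b (Some (Node S))) \<le> C * (K * K ^ msize S)"
      using assms(1)[of "Node S"] by simp
    also have "\<dots> \<le> C * (K * w ^ msize S)"
      using assms by (intro mult_left_mono power_mono) auto
    finally show "norm (b (Some (Node S))) \<le> C * K * w ^ msize S"
      by (simp add: mult_ac)
  qed simp
  also have "\<dots> = C * K * weighted_norm w p"
    by (simp add: weighted_norm_def sum_distrib_left mult_ac)
  finally show ?thesis .
qed

lemma prod_mset_image_mono:
  fixes f g :: "'a \<Rightarrow> 'b::linordered_semidom"
  assumes "\<And>c. c \<in># M \<Longrightarrow> 0 \<le> f c" "\<And>c. c \<in># M \<Longrightarrow> f c \<le> g c"
  shows "prod_mset (image_mset f M) \<le> prod_mset (image_mset g M)"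
proof -
  have "0 \<le> prod_mset (image_mset f M) \<and> prod_mset (image_mset f M) \<le> prod_mset (image_mset g M)"
    using assms
  proof (induction M)
    case (add x M)
    have "0 \<le> prod_mset (image_mset f M) \<and> prod_mset (image_mset f M) \<le> prod_mset (image_mset g M)"
      by (rule add.IH) (use add.prems in auto)
    then show ?case
      using add.prems[of x] by (auto intro: mult_mono)
  qed simp
  then show ?thesis ..
qed

lemma prod_mset_power_tsize: "prod_mset (image_mset (\<lambda>c. (E::real) ^ tsize c) M) = E ^ msize M"
  by (induction M) (simp_all add: power_add)

text \<open>Inductively, each factor \<open>\<psi>\<^sub>b(c)\<close> has weighted norm at most
  \<open>(D + x) E\<^bsup>|c|\<^esup> \<le> E\<^bsup>|c|\<^esup>\<close>.\<close>

lemma weighted_norm_subtree_gen_le: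
  fixes b :: "tree option \<Rightarrow> 'k::real_normed_field"
  assumes E: "E > 0" and x: "x \<ge> 0" and D: "D \<ge> 0" "D + x \<le> 1"
    and b: "\<And>u. tsize u < tsize t \<Longrightarrow> norm (b (Some u)) \<le> D * E ^ tsize u"
  shows "weighted_norm (x * E) (subtree_gen b t) * E \<le> E ^ tsize t"
  using b
proof (induction t)
  case (Node M)
  have w: "x * E \<ge> 0" using E x by simp
  have child: "weighted_norm (x * E) (child_gen b c) \<le> E ^ tsize c" if c: "c \<in># M" for c
  proof -
    have lt: "tsize c < tsize (Node M)"
      by (rule tsize_child_less[OF c])
    have IH: "weighted_norm (x * E) (subtree_gen b c) * E \<le> E ^ tsize c"
      by (rule Node.IH[OF c]) (use Node.prems lt in auto)
    have "weighted_norm (x * E) (child_gen b c) \<le> norm (b (Some c)) + x * E * weighted_norm (x * E) (subtree_gen b c)"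
      by (rule weighted_norm_child_gen_le[OF w])
    also have "\<dots> \<le> D * E ^ tsize c + x * E ^ tsize c"
      using Node.prems[OF lt] mult_left_mono[OF IH x] by (simp add: mult_ac)
    also have "\<dots> \<le> E ^ tsize c"
      using D E by (metis distrib_right mult_left_le_one_le zero_le_power less_imp_le add_nonneg_nonneg x)
    finally show ?thesis .
  qed
  have "weighted_norm (x * E) (subtree_gen b (Node M))
      \<le> prod_mset (image_mset (\<lambda>c. weighted_norm (x * E) (child_gen b c)) M)"
    unfolding subtree_gen_Node by (rule weighted_norm_prod_mset_le[OF w])
  also have "\<dots> \<le> prod_mset (image_mset (\<lambda>c. E ^ tsize c) M)"
    by (rule prod_mset_image_mono) (simp_all add: child weighted_norm_nonneg[OF w])
  also have "\<dots> = E ^ msize M"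
    by (rule prod_mset_power_tsize)
  finally show ?case
    using E by (simp add: mult_right_mono mult.commute)
qed

lemma tame_bound:
  fixes a :: "tree option \<Rightarrow> 'k::real_normed_field"
  assumes "tame a"
  obtains C K where "C \<ge> 1" "K > 0" "\<And>u. norm (a (Some u)) \<le> C * K ^ tsize u"
proof -
  obtain C K where CK: "C > 0" "K > 0" "\<And>t. norm (a (Some t)) \<le> C * K ^ tsize t"
    using assms unfolding tame_def by blast
  have "norm (a (Some u)) \<le> max C 1 * K ^ tsize u" for u
  proof -
    have "C * K ^ tsize u \<le> max C 1 * K ^ tsize u"
      using CK(2) by (intro mult_right_mono) auto
    then show ?thesis
      using CK(3)[of u] by linarith
  qed
  then show ?thesis
    using that[of "max C 1" K] CK by auto
qed

lemma tame_None: "tame a \<Longrightarrow> a None = 1"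
  by (simp add: tame_def)

lemma const_mult_power_le_half_power:
  fixes C K E :: real
  assumes "C \<ge> 1" "K > 0" "E \<ge> 2 * C * K" "n \<ge> 1"
  shows "C * K ^ n \<le> 1/2 * E ^ n"
proof -
  have "C * K ^ n \<le> C ^ n * K ^ n"
    using assms by (intro mult_right_mono) (auto simp: power_increasing[of 1 n C, simplified])
  also have "\<dots> \<le> 1/2 * (2 ^ n * (C * K) ^ n)"
    using assms(1,2) power_increasing[of 1 n "2::real"] assms(4)
    by (simp add: power_mult_distrib mult_right_mono)
  also have "\<dots> = 1/2 * (2 * C * K) ^ n"
    by (simp add: power_mult_distrib)
  also have "\<dots> \<le> 1/2 * E ^ n"
    using assms by (intro mult_left_mono power_mono) auto
  finally show ?thesis .
qed

lemma tame_bprod: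
  fixes a b :: "tree option \<Rightarrow> 'k::real_normed_field"
  assumes "tame a" "tame b"
  shows "tame (bprod a b)"
proof -
  obtain Ca Ka where a: "Ca \<ge> 1" "Ka > 0" "\<And>u. norm (a (Some u)) \<le> Ca * Ka ^ tsize u"
    using tame_bound[OF assms(1)] by blast
  obtain Cb Kb where b: "Cb \<ge> 1" "Kb > 0" "\<And>u. norm (b (Some u)) \<le> Cb * Kb ^ tsize u"
    using tame_bound[OF assms(2)] by blast
  define E where "E = 2 * Ca * Ka + 2 * Kb + 1"
  have E: "E \<ge> 1" "E \<ge> 2 * Ca * Ka" "Kb \<le> 1/2 * E"
    using a b by (auto simp: E_def)
  have a_half: "norm (a (Some u)) \<le> 1/2 * E ^ tsize u" for u
    using a(3)[of u] const_mult_power_le_half_power[OF a(1,2) E(2) tsize_pos[of u]] by linarith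
  have "norm (bprod a b (Some t)) \<le> (1/2 + Cb * Kb) * E ^ tsize t" for t
  proof -
    have "weighted_norm (1/2 * E) (subtree_gen a t) * E \<le> E ^ tsize t"
      by (rule weighted_norm_subtree_gen_le[where x="1/2" and D="1/2"]) (use E a_half in auto)
    moreover have "weighted_norm (1/2 * E) (subtree_gen a t) \<le> weighted_norm (1/2 * E) (subtree_gen a t) * E"
      using mult_left_mono[OF E(1) weighted_norm_nonneg[of "1/2 * E" "subtree_gen a t"]] E by simp
    ultimately have W: "weighted_norm (1/2 * E) (subtree_gen a t) \<le> E ^ tsize t"
      by linarith
    have "norm (bprod a b (Some t)) \<le> norm (a (Some t)) + norm (tree_eval b (subtree_gen a t))"
      by (simp add: bprod_Some tame_None[OF assms(2)] norm_triangle_ineq)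
    also have "\<dots> \<le> 1/2 * E ^ tsize t + Cb * Kb * weighted_norm (1/2 * E) (subtree_gen a t)"
      by (intro add_mono a_half norm_tree_eval_le) (use b E in auto)
    also have "\<dots> \<le> 1/2 * E ^ tsize t + Cb * Kb * E ^ tsize t"
      using b W by (intro add_left_mono mult_left_mono) auto
    finally show ?thesis by (simp add: algebra_simps)
  qed
  moreover have "1/2 + Cb * Kb > 0" "E > 0"
    using b E by (auto intro: add_pos_nonneg)
  ultimately show ?thesis
    unfolding tame_def using tame_None[OF assms(2)] by auto
qed

lemma tame_binv:
  fixes a :: "tree option \<Rightarrow> 'k::real_normed_field"
  assumes "tame a"
  shows "tame (binv a)"
proof -
  obtain Ca Ka where a: "Ca \<ge> 1" "Ka > 0" "\<And>u. norm (a (Some u)) \<le> Ca * Ka ^ tsize u"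
    using tame_bound[OF assms] by blast
  define E where "E = 2 * Ca * Ka"
  have E: "E > 0"
    using a by (simp add: E_def)
  have "norm (binv a (Some t)) \<le> 1/2 * E ^ tsize t" for t
  proof (induction "tsize t" arbitrary: t rule: less_induct)
    case less
    have W: "weighted_norm (1/2 * E) (subtree_gen (binv a) t) * E \<le> E ^ tsize t"
      by (rule weighted_norm_subtree_gen_le[where x="1/2" and D="1/2"]) (use E less in auto)
    have "norm (binv a (Some t)) = norm (tree_eval a (subtree_gen (binv a) t))"
      by (simp add: binv_Some[of a t])
    also have "\<dots> \<le> Ca * Ka * weighted_norm (1/2 * E) (subtree_gen (binv a) t)"
      by (rule norm_tree_eval_le) (use a in \<open>auto simp: E_def\<close>)
    also have "\<dots> = 1/2 * (weighted_norm (1/2 * E) (subtree_gen (binv a) t) * E)"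
      by (simp add: E_def)
    also have "\<dots> \<le> 1/2 * E ^ tsize t"
      using W by simp
    finally show ?case .
  qed
  then show ?thesis
    unfolding tame_def using E by (intro conjI exI[of _ "1/2"] exI[of _ E]) auto
qed

lemma tame_bunit: "tame (bunit :: tree option \<Rightarrow> 'k::real_normed_field)"
  unfolding tame_def by (intro conjI exI[of _ 1]) auto

lemma BTM_simps [simp]:
  "carrier BTM = {a. tame a}" "mult BTM = bprod" "one BTM = bunit"
  by (simp_all add: BTM_def)

lemma group_BTM: "group (BTM :: (tree option \<Rightarrow> 'k::real_normed_field) monoid)"
proof (rule groupI)
  fix x y z :: "tree option \<Rightarrow> 'k"
  show "x \<in> carrier BTM \<Longrightarrow> y \<in> carrier BTM \<Longrightarrow> x \<otimes>\<^bsub>BTM\<^esub> y \<in> carrier BTM"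
    by (simp add: tame_bprod)
  show "x \<in> carrier BTM \<Longrightarrow> y \<in> carrier BTM \<Longrightarrow> z \<in> carrier BTM \<Longrightarrow>
      x \<otimes>\<^bsub>BTM\<^esub> y \<otimes>\<^bsub>BTM\<^esub> z = x \<otimes>\<^bsub>BTM\<^esub> (y \<otimes>\<^bsub>BTM\<^esub> z)"
    by (simp add: bprod_assoc tame_None)
  show "\<one>\<^bsub>BTM\<^esub> \<otimes>\<^bsub>BTM\<^esub> x = x"
    by (simp add: bprod_bunit_left)
  show "x \<in> carrier BTM \<Longrightarrow> \<exists>y\<in>carrier BTM. y \<otimes>\<^bsub>BTM\<^esub> x = \<one>\<^bsub>BTM\<^esub>"
    by (auto intro!: bexI[of _ "binv x"] tame_binv bprod_binv_left tame_None)
qed (simp add: tame_bunit)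

lemma Ksub_eq_agree_upto: "Ksub n = {a \<in> carrier BTM. agree_upto n a bunit}"
  by (auto simp: Ksub_def agree_upto_def)

lemma subgroup_Ksub: "subgroup (Ksub n) (BTM :: (tree option \<Rightarrow> 'k::real_normed_field) monoid)"
proof -
  interpret BTM: group "BTM :: (tree option \<Rightarrow> 'k) monoid"
    by (rule group_BTM)
  show ?thesis
  proof (rule BTM.subgroupI)
    show "Ksub n \<subseteq> carrier BTM" "Ksub n \<noteq> {}"
      using tame_bunit by (auto simp: Ksub_eq_agree_upto)
  next
    fix h :: "tree option \<Rightarrow> 'k" assume "h \<in> Ksub n"
    then have h: "h \<in> carrier BTM" "agree_upto n h bunit"
      by (auto simp: Ksub_eq_agree_upto)
    have "agree_upto n (bprod (inv\<^bsub>BTM\<^esub> h) bunit) (bprod (inv\<^bsub>BTM\<^esub> h) h)"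
      using bprod_agree_upto[OF agree_upto_refl agree_upto_sym[OF h(2)]] h(1) by (simp add: tame_None)
    then show "inv\<^bsub>BTM\<^esub> h \<in> Ksub n"
      using BTM.r_one[of "inv\<^bsub>BTM\<^esub> h"] BTM.l_inv[OF h(1)] BTM.inv_closed[OF h(1)]
      by (simp add: Ksub_eq_agree_upto)
  next
    fix a b :: "tree option \<Rightarrow> 'k" assume "a \<in> Ksub n" "b \<in> Ksub n"
    then have ab: "a \<in> carrier BTM" "b \<in> carrier BTM" "agree_upto n a bunit" "agree_upto n b bunit"
      by (auto simp: Ksub_eq_agree_upto)
    then have "agree_upto n (bprod a b) (bprod bunit bunit)"
      by (intro bprod_agree_upto) (simp_all add: tame_None)
    then show "a \<otimes>\<^bsub>BTM\<^esub> b \<in> Ksub n"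
      using ab tame_bprod by (simp add: Ksub_eq_agree_upto bprod_bunit_left)
  qed
qed

lemma normal_Ksub: "Ksub n \<lhd> (BTM :: (tree option \<Rightarrow> 'k::real_normed_field) monoid)"
proof -
  interpret BTM: group "BTM :: (tree option \<Rightarrow> 'k) monoid"
    by (rule group_BTM)
  show ?thesis
    unfolding BTM.normal_inv_iff
  proof (intro conjI subgroup_Ksub ballI)
    fix x h :: "tree option \<Rightarrow> 'k" assume x: "x \<in> carrier BTM" and "h \<in> Ksub n"
    then have h: "h \<in> carrier BTM" "agree_upto n h bunit"
      by (auto simp: Ksub_eq_agree_upto)
    have "agree_upto n (bprod x h) (bprod x bunit)"
      using h by (intro bprod_agree_upto) (simp_all add: tame_None)
    then have "agree_upto n (bprod (bprod x h) (inv\<^bsub>BTM\<^esub> x)) (bprod (bprod x bunit) (inv\<^bsub>BTM\<^esub> x))"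
      by (rule bprod_agree_upto) simp_all
    moreover have "bprod (bprod x bunit) (inv\<^bsub>BTM\<^esub> x) = bunit"
      using BTM.r_one[OF x] BTM.r_inv[OF x] by simp
    moreover have "x \<otimes>\<^bsub>BTM\<^esub> h \<otimes>\<^bsub>BTM\<^esub> inv\<^bsub>BTM\<^esub> x \<in> carrier BTM"
      using x h(1) BTM.inv_closed[OF x] by (simp add: tame_bprod)
    ultimately show "x \<otimes>\<^bsub>BTM\<^esub> h \<otimes>\<^bsub>BTM\<^esub> inv\<^bsub>BTM\<^esub> x \<in> Ksub n"
      by (simp add: Ksub_eq_agree_upto)
  qed
qed

section \<open>The chart and the modelling space\<close>

lemma inE_iff_bound:
  "inE k x \<longleftrightarrow> x None = 0 \<and> (\<exists>B. \<forall>t. norm (x (Some t)) \<le> B * 2 ^ (k * tsize t))"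
  by (simp add: inE_def bdd_above_def pos_divide_le_eq)

lemma inE_mono:
  assumes "inE k x" "k \<le> k'"
  shows "inE k' x"
proof -
  obtain B where B: "\<And>t. norm (x (Some t)) \<le> B * 2 ^ (k * tsize t)"
    using assms(1) by (auto simp: inE_iff_bound)
  have "norm (x (Some t)) \<le> max B 0 * 2 ^ (k' * tsize t)" for t
  proof -
    have "(2::real) ^ (k * tsize t) \<le> 2 ^ (k' * tsize t)"
      using assms(2) by (intro power_increasing) auto
    then have "B * 2 ^ (k * tsize t) \<le> max B 0 * 2 ^ (k' * tsize t)"
      by (intro mult_mono) auto
    then show ?thesis
      using B[of t] by linarith
  qed
  then show ?thesis
    using assms(1) by (auto simp: inE_iff_bound)
qed

lemma inE_add:
  assumes "inE k x" "inE k y"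
  shows "inE k (\<lambda>t. x t + y t)"
proof -
  obtain B B' where B: "\<And>t. norm (x (Some t)) \<le> B * 2 ^ (k * tsize t)"
    and B': "\<And>t. norm (y (Some t)) \<le> B' * 2 ^ (k * tsize t)"
    using assms by (auto simp: inE_iff_bound)
  have "norm (x (Some t) + y (Some t)) \<le> (B + B') * 2 ^ (k * tsize t)" for t
    using norm_triangle_ineq[of "x (Some t)" "y (Some t)"] B[of t] B'[of t]
    by (simp add: distrib_right)
  then show ?thesis
    using assms by (auto simp: inE_iff_bound)
qed

lemma inE_scale:
  assumes "inE k x"
  shows "inE k (\<lambda>t. c * x t)"
proof -
  obtain B where "\<And>t. norm (x (Some t)) \<le> B * 2 ^ (k * tsize t)"
    using assms by (auto simp: inE_iff_bound)
  then have "norm (c * x (Some t)) \<le> (norm c * B) * 2 ^ (k * tsize t)" for t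
    by (simp add: norm_mult mult.assoc mult_left_mono)
  then show ?thesis
    using assms by (auto simp: inE_iff_bound)
qed

lemma inE_dominated:
  assumes "inE k x" "y None = 0" "\<And>t. norm (y (Some t)) \<le> norm (x (Some t))"
  shows "inE k y"
  using assms by (auto simp: inE_iff_bound intro: order_trans)

lemma Mstar_iff_exponential_bound:
  "x \<in> Mstar \<longleftrightarrow> x None = 0 \<and> (\<exists>C>0. \<exists>K>0. \<forall>t. norm (x (Some t)) \<le> C * K ^ tsize t)"
proof
  assume "x \<in> Mstar"
  then obtain k B where x: "x None = 0" "\<And>t. norm (x (Some t)) \<le> B * 2 ^ (k * tsize t)"
    by (auto simp: Mstar_def inE_iff_bound)
  have "norm (x (Some t)) \<le> max B 1 * (2 ^ k) ^ tsize t" for t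
  proof -
    have "B * 2 ^ (k * tsize t) \<le> max B 1 * (2 ^ k) ^ tsize t"
      by (simp add: power_mult mult_right_mono)
    then show ?thesis
      using x(2)[of t] by linarith
  qed
  moreover have "max B 1 > 0" "(2::real) ^ k > 0"
    by auto
  ultimately show "x None = 0 \<and> (\<exists>C>0. \<exists>K>0. \<forall>t. norm (x (Some t)) \<le> C * K ^ tsize t)"
    using x(1) by blast
next
  assume "x None = 0 \<and> (\<exists>C>0. \<exists>K>0. \<forall>t. norm (x (Some t)) \<le> C * K ^ tsize t)"
  then obtain C K where x: "x None = 0" "C > 0" "K > 0" "\<And>t. norm (x (Some t)) \<le> C * K ^ tsize t"
    by blast
  obtain k where k: "K < 2 ^ k"
    using real_arch_pow[of 2 K] by auto
  have "norm (x (Some t)) \<le> C * 2 ^ (k * tsize t)" for t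
  proof -
    have "C * K ^ tsize t \<le> C * 2 ^ (k * tsize t)"
      using k x by (simp add: power_mult power_mono)
    then show ?thesis
      using x(4)[of t] by linarith
  qed
  then have "inE k x"
    using x(1) by (auto simp: inE_iff_bound)
  then show "x \<in> Mstar"
    by (auto simp: Mstar_def)
qed

lemma tame_iff_chart_in_Mstar: "tame a \<longleftrightarrow> chart a \<in> Mstar"
  by (simp add: tame_def Mstar_iff_exponential_bound chart_def)

lemma chart_Ksub: "chart ` (Ksub n :: (tree option \<Rightarrow> 'k::real_normed_field) set) = Vsub n"
proof
  show "chart ` Ksub n \<subseteq> (Vsub n :: (tree option \<Rightarrow> 'k) set)"
    by (auto simp: Ksub_def Vsub_def tame_iff_chart_in_Mstar chart_def)
next
  show "Vsub n \<subseteq> chart ` (Ksub n :: (tree option \<Rightarrow> 'k) set)"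
  proof
    fix x :: "tree option \<Rightarrow> 'k" assume x: "x \<in> Vsub n"
    have "x = chart (\<lambda>y. x y + bunit y)"
      by (simp add: chart_def)
    moreover have "(\<lambda>y. x y + bunit y) \<in> Ksub n"
      using x by (simp add: Ksub_def Vsub_def tame_iff_chart_in_Mstar flip: \<open>x = _\<close>)
    ultimately show "x \<in> chart ` Ksub n" ..
  qed
qed

lemma Vsub_subset_Mstar: "Vsub n \<subseteq> Mstar"
  by (auto simp: Vsub_def)

lemma norm_le_wnorm:
  assumes "inE k x"
  shows "norm (x (Some t)) / 2 ^ (k * tsize t) \<le> wnorm k x"
  unfolding wnorm_def using assms by (intro cSUP_upper) (auto simp: inE_def)

lemma ind_closed_Vsub: "ind_closed (Vsub n :: (tree option \<Rightarrow> 'k::real_normed_field) set)"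
  unfolding ind_closed_def ind_open_def
proof (intro conjI allI ballI impI Diff_subset Vsub_subset_Mstar)
  fix k and x :: "tree option \<Rightarrow> 'k"
  assume x: "x \<in> Mstar - Vsub n" and xk: "inE k x"
  then obtain t0 where t0: "tsize t0 \<le> n" "x (Some t0) \<noteq> 0"
    by (auto simp: Vsub_def)
  define \<epsilon> where "\<epsilon> = norm (x (Some t0)) / 2 ^ (k * tsize t0)"
  have "y \<in> Mstar - Vsub n" if y: "inE k y" "wnorm k (\<lambda>t. y t - x t) < \<epsilon>" for y
  proof -
    have "inE k (\<lambda>t. y t - x t)"
      using inE_add[OF y(1) inE_scale[OF xk, of "-1"]] by simp
    then have "norm (y (Some t0) - x (Some t0)) / 2 ^ (k * tsize t0) \<le> wnorm k (\<lambda>t. y t - x t)"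
      using norm_le_wnorm by fastforce
    then have "norm (y (Some t0) - x (Some t0)) / 2 ^ (k * tsize t0) < \<epsilon>"
      using y(2) by linarith
    then have "y (Some t0) \<noteq> 0"
      by (auto simp: \<epsilon>_def divide_less_cancel)
    then show ?thesis
      using y t0 by (auto simp: Mstar_def Vsub_def)
  qed
  moreover have "\<epsilon> > 0"
    using t0 by (simp add: \<epsilon>_def)
  ultimately show "\<exists>\<epsilon>>0. \<forall>y. inE k y \<and> wnorm k (\<lambda>t. y t - x t) < \<epsilon> \<longrightarrow> y \<in> Mstar - Vsub n"
    by blast
qed

lemma zero_in_Vsub: "(\<lambda>_. 0) \<in> Vsub n"
proof -
  have "inE 0 (\<lambda>_. 0 :: 'k::real_normed_field)"
    by (auto simp: inE_iff_bound intro: exI[of _ 0])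
  then show ?thesis
    by (auto simp: Vsub_def Mstar_def)
qed

lemma klinear_subspace_Vsub: "klinear_subspace (Vsub n :: (tree option \<Rightarrow> 'k::real_normed_field) set)"
  unfolding klinear_subspace_def
proof (intro conjI ballI allI zero_in_Vsub)
  fix x y :: "tree option \<Rightarrow> 'k" assume x: "x \<in> Vsub n" and y: "y \<in> Vsub n"
  then obtain k k' where "inE k x" "inE k' y"
    by (auto simp: Vsub_def Mstar_def)
  then have "inE (max k k') (\<lambda>t. x t + y t)"
    by (intro inE_add) (auto elim: inE_mono)
  then show "(\<lambda>t. x t + y t) \<in> Vsub n"
    using x y by (auto simp: Vsub_def Mstar_def)
next
  fix c :: 'k and x :: "tree option \<Rightarrow> 'k" assume x: "x \<in> Vsub n"
  then show "(\<lambda>t. c * x t) \<in> Vsub n"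
    by (auto simp: Vsub_def Mstar_def dest: inE_scale)
qed

definition tree_indicator :: "tree \<Rightarrow> tree option \<Rightarrow> 'k::real_normed_field" where
  "tree_indicator s = (\<lambda>x. if x = Some s then 1 else 0)"

lemma inj_tree_indicator: "inj (tree_indicator :: tree \<Rightarrow> tree option \<Rightarrow> 'k::real_normed_field)"
proof (rule injI)
  fix s t assume "(tree_indicator s :: tree option \<Rightarrow> 'k) = tree_indicator t"
  then have "(tree_indicator s (Some s) :: 'k) = tree_indicator t (Some s)"
    by simp
  then show "s = t"
    by (simp add: tree_indicator_def split: if_splits)
qed

lemma tree_indicator_in_Mstar: "(tree_indicator s :: tree option \<Rightarrow> 'k::real_normed_field) \<in> Mstar"
  unfolding Mstar_def inE_iff_bound tree_indicator_def by (auto intro!: exI[of _ 0] exI[of _ 1])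

lemma kspan_tree_indicator:
  assumes "finite T"
  shows "kspan (tree_indicator ` T :: (tree option \<Rightarrow> 'k::real_normed_field) set)
    = {x. x None = 0 \<and> (\<forall>t. t \<notin> T \<longrightarrow> x (Some t) = 0)}"
proof -
  have inj: "inj_on (tree_indicator :: tree \<Rightarrow> tree option \<Rightarrow> 'k) T"
    using inj_tree_indicator by (rule inj_on_subset) simp
  have eval: "(\<Sum>b\<in>tree_indicator ` T. c b * b y)
      = (case y of None \<Rightarrow> 0 | Some t \<Rightarrow> if t \<in> T then c (tree_indicator t) else 0)"
    for c :: "(tree option \<Rightarrow> 'k) \<Rightarrow> 'k" and y
  proof -
    have "(\<Sum>b\<in>tree_indicator ` T. c b * b y) = (\<Sum>s\<in>T. c (tree_indicator s) * tree_indicator s y)"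
      by (simp add: sum.reindex[OF inj])
    also have "\<dots> = (case y of None \<Rightarrow> 0 | Some t \<Rightarrow> if t \<in> T then c (tree_indicator t) else 0)"
      using assms by (cases y) (simp_all add: tree_indicator_def if_distrib sum.delta cong: if_cong)
    finally show ?thesis .
  qed
  show ?thesis
  proof (intro equalityI subsetI)
    fix x :: "tree option \<Rightarrow> 'k" assume "x \<in> kspan (tree_indicator ` T)"
    then show "x \<in> {x. x None = 0 \<and> (\<forall>t. t \<notin> T \<longrightarrow> x (Some t) = 0)}"
      by (auto simp: kspan_def eval)
  next
    fix x :: "tree option \<Rightarrow> 'k" assume x: "x \<in> {x. x None = 0 \<and> (\<forall>t. t \<notin> T \<longrightarrow> x (Some t) = 0)}"
    have "x = (\<lambda>y. \<Sum>b\<in>tree_indicator ` T. x (Some (the_inv_into T tree_indicator b)) * b y)"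
      using x by (auto simp: eval the_inv_into_f_f[OF inj] split: option.split)
    then show "x \<in> kspan (tree_indicator ` T)"
      unfolding kspan_def by (intro CollectI exI[of _ "\<lambda>b. x (Some (the_inv_into T tree_indicator b))"]) simp
  qed
qed

lemma split_fin_codim_Vsub: "split_fin_codim (Vsub n :: (tree option \<Rightarrow> 'k::real_normed_field) set)"
proof -
  let ?B = "tree_indicator ` {t. tsize t \<le> n} :: (tree option \<Rightarrow> 'k) set"
  have span: "kspan ?B = {x. x None = 0 \<and> (\<forall>t. n < tsize t \<longrightarrow> x (Some t) = 0)}"
    by (simp add: kspan_tree_indicator[OF finite_tsize_le] not_le)
  have zero: "v = (\<lambda>_. 0)" if v: "v \<in> Vsub n" "v \<in> kspan ?B" for v
  proof
    fix y
    show "v y = 0"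
    proof (cases y)
      case (Some t)
      then show ?thesis
        using v by (cases "tsize t \<le> n") (auto simp: span Vsub_def)
    qed (use v in \<open>simp add: span\<close>)
  qed
  have "(\<lambda>_. 0) \<in> kspan ?B"
    by (simp add: span)
  then have inter: "Vsub n \<inter> kspan ?B = {\<lambda>_. 0}"
    using zero zero_in_Vsub by (intro equalityI subsetI) auto
  have decomp: "\<exists>v\<in>Vsub n. \<exists>w\<in>kspan ?B. x = (\<lambda>t. v t + w t)" if x: "x \<in> Mstar" for x
  proof -
    define w where "w y = (case y of None \<Rightarrow> 0 | Some t \<Rightarrow> if tsize t \<le> n then x y else 0)" for y
    obtain k where k: "inE k x"
      using x by (auto simp: Mstar_def)
    have "x None = 0"
      using k by (simp add: inE_def)
    then have "inE k (\<lambda>y. x y - w y)"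
      by (intro inE_dominated[OF k]) (simp_all add: w_def)
    then have "(\<lambda>y. x y - w y) \<in> Vsub n"
      by (auto simp: Vsub_def Mstar_def w_def)
    moreover have "w \<in> kspan ?B"
      by (simp add: span w_def)
    ultimately show ?thesis
      by (intro bexI[where x="\<lambda>y. x y - w y"] bexI[where x=w]) auto
  qed
  have "finite ?B" "?B \<subseteq> Mstar"
    using finite_tsize_le tree_indicator_in_Mstar by auto
  with inter decomp show ?thesis
    unfolding split_fin_codim_def
    by (intro conjI klinear_subspace_Vsub Vsub_subset_Mstar ind_closed_Vsub exI[of _ ?B]) auto
qed

theorem proposition2p10:
  fixes n :: nat
  shows "normal (Ksub n :: (tree option \<Rightarrow> complex) set) BTM
       \<and> chart ` (Ksub n :: (tree option \<Rightarrow> complex) set) = Vsub n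
       \<and> ind_closed (chart ` (Ksub n :: (tree option \<Rightarrow> complex) set))
       \<and> split_fin_codim (Vsub n :: (tree option \<Rightarrow> complex) set)
       \<and> normal (Ksub n :: (tree option \<Rightarrow> real) set) BTM
       \<and> chart ` (Ksub n :: (tree option \<Rightarrow> real) set) = Vsub n
       \<and> ind_closed (chart ` (Ksub n :: (tree option \<Rightarrow> real) set))
       \<and> split_fin_codim (Vsub n :: (tree option \<Rightarrow> real) set)"
  by (simp add: normal_Ksub chart_Ksub ind_closed_Vsub split_fin_codim_Vsub)

end
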